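(* For every $n$-variable Boolean function $f$ it holds that $NN(f)\le(1+o(1))\frac{2^{n+2}}{n}$, where $o(1)$ denotes a quantity depending only on $n$ that tends to $0$ as $n\to\infty$.
   Context: For a Boolean function $f:\{0,1\}^n\to\{0,1\}$, a nearest neighbor representation is a pair of disjoint sets $(P,N)$ of points of $\mathbb R^n$ such that for every $a\in\{0,1\}^n$: if $f(a)=1$, there is $b\in P$ with $d(a,b)<d(a,c)$ for all $c\in N$; if $f(a)=0$, there is $b\in N$ with $d(a,b)<d(a,c)$ for all $c\in P$ ($d$ = Euclidean distance). $NN(f)$ is the minimum of $|P\cup N|$ over all nearest neighbor representations of $f$. *)

theory Defs
  imports Complex_Main
begin

text \<open>A Boolean function is a predicate on
the cube (its values outside the cube are irrelevant).\<close>

definition bcube :: "nat \<Rightarrow> real list set" where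
  "bcube n = {a. length a = n \<and> set a \<subseteq> {0, 1}}"

definition edist :: "real list \<Rightarrow> real list \<Rightarrow> real" where
  "edist a b = sqrt (\<Sum>i<length a. (a ! i - b ! i)^2)"

definition is_nn_rep :: "nat \<Rightarrow> (real list \<Rightarrow> bool) \<Rightarrow> real list set \<Rightarrow> real list set \<Rightarrow> bool" where
  "is_nn_rep n f P N \<longleftrightarrow>
     finite P \<and> finite N \<and> P \<inter> N = {} \<and>
     (\<forall>x\<in>P \<union> N. length x = n) \<and>
     (\<forall>a\<in>bcube n.
        (f a \<longrightarrow> (\<exists>b\<in>P. \<forall>c\<in>N. edist a b < edist a c)) \<and>
        (\<not> f a \<longrightarrow> (\<exists>b\<in>N. \<forall>c\<in>P. edist a b < edist a c)))"

definition NN :: "nat \<Rightarrow> (real list \<Rightarrow> bool) \<Rightarrow> nat" where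
  "NN n f = (LEAST k. \<exists>P N. is_nn_rep n f P N \<and> card (P \<union> N) = k)"

end

theory Submission
  imports Defs
begin

(* Call V dominating if every cube point lies in V or one coordinate flip away from V.
   With 2^k \<le> n + 1 < 2^(k+1), the points whose Hamming syndrome on the first 2^k - 1
   coordinates (the XOR of the 1-based positions carrying a 1) vanishes form such a set:
   flipping coordinate j changes the syndrome by j + 1, so the 2^k fibres of the syndrome
   have equal size and every point reaches the zero fibre with at most one flip.  Hence
   |V| = 2^(n-k) < 2^(n+1) / n.

   Around each centre v in V place one point of each label, moved by about 1/(4n) in every
   coordinate towards the neighbours of v carrying that label and away from the others, the
   point labelled f v being the closer one to v.  A cube point a is then strictly nearer to
   the point of label f a at its dominating centre than to any point of the other label, so
   NN(f) \<le> 2|V| < 2^(n+2) / n; the bound holds even with o(1) = 0. *)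

unbundle bit_operations_syntax

definition flip :: "real list \<Rightarrow> nat \<Rightarrow> real list" where
  "flip v i = v[i := 1 - v!i]"

lemma bcube_length: "x \<in> bcube n \<Longrightarrow> length x = n"
  by (simp add: bcube_def)

lemma bcube_nth: "x \<in> bcube n \<Longrightarrow> i < n \<Longrightarrow> x!i = 0 \<or> x!i = 1"
  unfolding bcube_def by (auto dest: nth_mem)

lemma finite_bcube: "finite (bcube n)" and card_bcube: "card (bcube n) = 2^n"
proof -
  have "bcube n = {xs. set xs \<subseteq> {0, 1} \<and> length xs = n}"
    by (auto simp: bcube_def)
  then show "finite (bcube n)" "card (bcube n) = 2^n"
    by (simp_all add: finite_lists_length_eq card_lists_length_eq numeral_2_eq_2)
qed

lemma length_flip [simp]: "length (flip v j) = length v"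
  by (simp add: flip_def)

lemma flip_nth: "j < length v \<Longrightarrow> flip v j ! i = (if i = j then 1 - v!j else v!i)"
  by (simp add: flip_def)

lemma flip_flip [simp]: "flip (flip v j) j = v"
  unfolding flip_def by (cases "j < length v") (auto simp: list_update_beyond)

lemma flip_in_bcube:
  assumes "x \<in> bcube n" "j < n"
  shows "flip x j \<in> bcube n"
proof -
  have "1 - x!j \<in> {0, 1}"
    using bcube_nth[OF assms] by auto
  then show ?thesis
    using assms set_update_subset_insert[of x j "1 - x!j"]
    by (auto simp: flip_def bcube_def)
qed

fun hamming_syndrome :: "real list \<Rightarrow> nat \<Rightarrow> nat" where
  "hamming_syndrome x 0 = 0"
| "hamming_syndrome x (Suc i) = hamming_syndrome x i XOR (if x!i = 1 then Suc i else 0)"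

lemma hamming_syndrome_flip:
  assumes "x \<in> bcube n" "j < n"
  shows "hamming_syndrome (flip x j) m =
    (if j < m then hamming_syndrome x m XOR Suc j else hamming_syndrome x m)"
proof (induction m)
  case (Suc m)
  show ?case
  proof (cases "m = j")
    case True
    have "x!j = 0 \<or> x!j = 1" "j < length x"
      using assms bcube_nth bcube_length by auto
    with Suc True show ?thesis
      by (auto simp: flip_nth xor.assoc)
  next
    case False
    then have "flip x j ! m = x ! m"
      using assms bcube_length by (simp add: flip_nth)
    with Suc False show ?thesis
      by (auto simp: xor.assoc xor.commute xor.left_commute)
  qed
qed simp

lemma xor_less_power:
  fixes x y :: nat
  assumes "x < 2^k" "y < 2^k"
  shows "x XOR y < 2^k"
proof -
  have "take_bit k (x XOR y) = x XOR y"
    using assms by (simp only: take_bit_xor take_bit_nat_eq_self)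
  then show ?thesis
    by (simp only: take_bit_nat_eq_self_iff)
qed

lemma hamming_syndrome_less: "m < 2^k \<Longrightarrow> hamming_syndrome x m < 2^k"
  by (induction m) (simp_all add: xor_less_power)

lemma card_hamming_syndrome_fibre:
  assumes "m \<le> n" "r \<le> m"
  shows "card {x \<in> bcube n. hamming_syndrome x m = r} =
         card {x \<in> bcube n. hamming_syndrome x m = 0}"
proof (cases "r = 0")
  case False
  define j where "j = r - 1"
  have j: "j < m" "j < n" "Suc j = r"
    using assms False by (auto simp: j_def)
  have flip_syndrome: "hamming_syndrome (flip x j) m = hamming_syndrome x m XOR r"
    if "x \<in> bcube n" for x
    using that j by (simp add: hamming_syndrome_flip)
  have "bij_betw (\<lambda>x. flip x j)
      {x \<in> bcube n. hamming_syndrome x m = r} {x \<in> bcube n. hamming_syndrome x m = 0}"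
  proof (rule bij_betw_byWitness[where f' = "\<lambda>x. flip x j"])
    show "(\<lambda>x. flip x j) ` {x \<in> bcube n. hamming_syndrome x m = r}
        \<subseteq> {x \<in> bcube n. hamming_syndrome x m = 0}"
      using j by (auto simp: flip_in_bcube flip_syndrome)
    show "(\<lambda>x. flip x j) ` {x \<in> bcube n. hamming_syndrome x m = 0}
        \<subseteq> {x \<in> bcube n. hamming_syndrome x m = r}"
      using j by (auto simp: flip_in_bcube flip_syndrome)
  qed simp_all
  then show ?thesis
    by (rule bij_betw_same_card)
qed simp

definition cube_dominating :: "nat \<Rightarrow> real list set \<Rightarrow> bool" where
  "cube_dominating n V \<longleftrightarrow>
     V \<subseteq> bcube n \<and> (\<forall>x\<in>bcube n. x \<in> V \<or> (\<exists>v\<in>V. \<exists>j<n. x = flip v j))"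

lemma hamming_code_dominating:
  assumes "2^k \<le> n + 1"
  shows "\<exists>V. cube_dominating n V \<and> card V * 2^k = 2^n"
proof -
  define m :: nat where "m = 2^k - 1"
  define C where "C = {x \<in> bcube n. hamming_syndrome x m = 0}"
  have m: "m \<le> n" "m < 2^k" "Suc m = 2^k"
    using assms by (simp_all add: m_def)
  have syndrome_le: "hamming_syndrome x m \<le> m" for x
    using hamming_syndrome_less[OF m(2)] m(3) by (metis less_Suc_eq_le)
  have "card (bcube n) = (\<Sum>r\<le>m. card {x \<in> bcube n. hamming_syndrome x m = r})"
    unfolding card_eq_sum
    by (rule sum.group[symmetric]) (auto simp: finite_bcube syndrome_le)
  also have "\<dots> = (\<Sum>r\<le>m. card C)"
    unfolding C_def by (intro sum.cong refl card_hamming_syndrome_fibre[OF m(1)]) simp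
  also have "\<dots> = card C * 2^k"
    by (simp add: m(3))
  finally have "card C * 2^k = 2^n"
    by (simp add: card_bcube)
  moreover have "cube_dominating n C"
    unfolding cube_dominating_def
  proof (intro conjI ballI)
    fix x assume x: "x \<in> bcube n"
    show "x \<in> C \<or> (\<exists>v\<in>C. \<exists>j<n. x = flip v j)"
    proof (cases "hamming_syndrome x m = 0")
      case False
      define j where "j = hamming_syndrome x m - 1"
      have "j < m"
        using syndrome_le[of x] False by (simp add: j_def)
      then have "flip x j \<in> C" "j < n"
        using x m False by (auto simp: C_def j_def flip_in_bcube hamming_syndrome_flip)
      then show ?thesis
        by (intro disjI2 bexI[of _ "flip x j"]) auto
    qed (simp add: C_def x)
  qed (auto simp: C_def)
  ultimately show ?thesis
    by blast
qed

definition sqdist :: "real list \<Rightarrow> real list \<Rightarrow> real" where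
  "sqdist a b = (\<Sum>i<length a. (a!i - b!i)^2)"

lemma edist_less_iff: "edist a b < edist a c \<longleftrightarrow> sqdist a b < sqdist a c"
  by (simp add: edist_def sqdist_def)

definition shift :: "real list \<Rightarrow> real \<Rightarrow> (nat \<Rightarrow> real) \<Rightarrow> real list" where
  "shift v t w = map (\<lambda>i. v!i + t * w i) [0..<length v]"

lemma length_shift [simp]: "length (shift v t w) = length v"
  by (simp add: shift_def)

lemma sqdist_shift:
  assumes "length a = n" "length v = n" "\<forall>i<n. \<bar>w i\<bar> = 1"
  shows "sqdist a (shift v t w) = sqdist a v - 2 * t * (\<Sum>i<n. (a!i - v!i) * w i) + n * t^2"
proof -
  have "sqdist a (shift v t w) = (\<Sum>i<n. (a!i - v!i)^2 - 2 * t * ((a!i - v!i) * w i) + t^2)"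
  proof (unfold sqdist_def, intro sum.cong)
    fix i assume "i \<in> {..<n}"
    then have "i < n" "(w i)^2 = 1"
      using assms by (auto simp: abs_square_eq_1)
    then show "(a!i - shift v t w ! i)^2 = (a!i - v!i)^2 - 2 * t * ((a!i - v!i) * w i) + t^2"
      using assms by (simp add: shift_def power2_eq_square algebra_simps)
  qed (use assms in simp)
  then show ?thesis
    using assms by (simp add: sqdist_def sum.distrib sum_subtractf sum_distrib_left)
qed

lemma sqdist_bcube:
  assumes "a \<in> bcube n" "v \<in> bcube n"
  shows "sqdist a v = card {i. i < n \<and> a!i \<noteq> v!i}"
proof -
  have "sqdist a v = (\<Sum>i<n. of_bool (a!i \<noteq> v!i))"
    unfolding sqdist_def bcube_length[OF assms(1)]
  proof (intro sum.cong refl)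
    fix i assume "i \<in> {..<n}"
    then have "a!i = 0 \<or> a!i = 1" "v!i = 0 \<or> v!i = 1"
      using assms bcube_nth by auto
    then show "(a!i - v!i)^2 = of_bool (a!i \<noteq> v!i)"
      by auto
  qed
  also have "\<dots> = card {i. i < n \<and> a!i \<noteq> v!i}"
    by (simp add: Int_def)
  finally show ?thesis .
qed

lemma abs_sum_le_sqdist:
  assumes "a \<in> bcube n" "v \<in> bcube n" "\<forall>i<n. \<bar>w i\<bar> = 1"
  shows "\<bar>\<Sum>i<n. (a!i - v!i) * w i\<bar> \<le> sqdist a v"
proof -
  have "\<bar>\<Sum>i<n. (a!i - v!i) * w i\<bar> \<le> (\<Sum>i<n. \<bar>(a!i - v!i) * w i\<bar>)"
    by (rule sum_abs)
  also have "\<dots> = (\<Sum>i<n. (a!i - v!i)^2)"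
  proof (intro sum.cong refl)
    fix i assume "i \<in> {..<n}"
    then have "\<bar>w i\<bar> = 1" "a!i = 0 \<or> a!i = 1" "v!i = 0 \<or> v!i = 1"
      using assms bcube_nth by auto
    then show "\<bar>(a!i - v!i) * w i\<bar> = (a!i - v!i)^2"
      by (auto simp: abs_mult)
  qed
  also have "\<dots> = sqdist a v"
    by (simp add: sqdist_def bcube_length[OF assms(1)])
  finally show ?thesis .
qed

lemma sqdist_shift_ge:
  assumes "a \<in> bcube n" "v \<in> bcube n" "\<forall>i<n. \<bar>w i\<bar> = 1"
  shows "sqdist a v * (1 - 2 * \<bar>t\<bar>) \<le> sqdist a (shift v t w)"
proof -
  define S where "S = (\<Sum>i<n. (a!i - v!i) * w i)"
  have "sqdist a (shift v t w) = sqdist a v - 2 * t * S + n * t^2"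
    unfolding S_def
    by (rule sqdist_shift[OF bcube_length[OF assms(1)] bcube_length[OF assms(2)] assms(3)])
  also have "\<dots> \<ge> sqdist a v - 2 * \<bar>t\<bar> * sqdist a v"
  proof -
    have "t * S \<le> \<bar>t\<bar> * \<bar>S\<bar>"
      by (metis abs_ge_self abs_mult)
    also have "\<dots> \<le> \<bar>t\<bar> * sqdist a v"
      unfolding S_def by (intro mult_left_mono abs_sum_le_sqdist[OF assms]) simp
    finally have "t * S \<le> \<bar>t\<bar> * sqdist a v" .
    moreover have "0 \<le> n * t^2"
      by simp
    ultimately show ?thesis
      unfolding mult.assoc by linarith
  qed
  finally show ?thesis
    by (simp add: algebra_simps)
qed

lemma sqdist_flip_left:
  assumes "v \<in> bcube n" "j < n"
  shows "sqdist (flip v j) v = 1"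
proof -
  have "{i. i < n \<and> flip v j ! i \<noteq> v!i} = {j}"
    using assms bcube_length[OF assms(1)] bcube_nth[OF assms] by (auto simp: flip_nth)
  then show ?thesis
    using sqdist_bcube[OF flip_in_bcube[OF assms] assms(1)] by simp
qed

lemma bcube_near_cases:
  assumes "a \<in> bcube n" "v \<in> bcube n"
  obtains "a = v" | j where "j < n" "a = flip v j" | "2 \<le> sqdist a v"
proof -
  let ?D = "{i. i < n \<and> a!i \<noteq> v!i}"
  have len: "length a = n" "length v = n"
    using assms by (simp_all add: bcube_length)
  consider "card ?D = 0" | "card ?D = Suc 0" | "2 \<le> card ?D"
    by linarith
  then show ?thesis
  proof cases
    case 1
    then have "?D = {}"
      by simp
    then have "a!i = v!i" if "i < n" for i
      using that by blast
    then have "a = v"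
      using len by (simp add: nth_equalityI)
    then show ?thesis
      by (rule that(1))
  next
    case 2
    then obtain j where "?D = {j}"
      unfolding card_1_singleton_iff by blast
    then have j: "j < n" "a!j \<noteq> v!j" and same: "\<And>i. i < n \<Longrightarrow> i \<noteq> j \<Longrightarrow> a!i = v!i"
      by blast+
    have "a!j = 1 - v!j"
      using j bcube_nth[OF assms(1) j(1)] bcube_nth[OF assms(2) j(1)] by auto
    then have "a = flip v j"
      using len j same by (simp add: nth_equalityI flip_nth)
    then show ?thesis
      by (rule that(2)[OF j(1)])
  next
    case 3
    then have "2 \<le> sqdist a v"
      by (simp add: sqdist_bcube[OF assms])
    then show ?thesis
      by (rule that(3))
  qed
qed

definition nn_direction :: "(real list \<Rightarrow> bool) \<Rightarrow> real list \<Rightarrow> nat \<Rightarrow> real" where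
  "nn_direction f v i = (if f (flip v i) then 1 else -1) * (1 - 2 * v!i)"

definition nn_offset :: "(real list \<Rightarrow> bool) \<Rightarrow> real \<Rightarrow> real list \<Rightarrow> bool \<Rightarrow> real" where
  "nn_offset f e v b = (if b then 1 else -1) * (if f v = b then e / 2 else e)"

definition nn_point :: "(real list \<Rightarrow> bool) \<Rightarrow> real \<Rightarrow> real list \<Rightarrow> bool \<Rightarrow> real list" where
  "nn_point f e v b = shift v (nn_offset f e v b) (nn_direction f v)"

lemma abs_nn_direction: "v \<in> bcube n \<Longrightarrow> i < n \<Longrightarrow> \<bar>nn_direction f v i\<bar> = 1"
  using bcube_nth[of v n i] by (auto simp: nn_direction_def)

lemma abs_nn_offset_le: "0 \<le> e \<Longrightarrow> \<bar>nn_offset f e v b\<bar> \<le> e"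
  by (auto simp: nn_offset_def)

lemma nn_offset_squared: "(nn_offset f e v b)^2 = (if f v = b then e^2 / 4 else e^2)"
  by (auto simp: nn_offset_def power2_eq_square)

lemma sqdist_nn_point_centre:
  assumes "v \<in> bcube n"
  shows "sqdist v (nn_point f e v b) = n * (nn_offset f e v b)^2"
  using sqdist_shift[OF bcube_length[OF assms] bcube_length[OF assms]] abs_nn_direction[OF assms]
  by (simp add: nn_point_def sqdist_def)

lemma sqdist_nn_point_flip:
  assumes "v \<in> bcube n" "j < n"
  shows "sqdist (flip v j) (nn_point f e v b) =
    1 - 2 * nn_offset f e v b * (if f (flip v j) then 1 else -1) + n * (nn_offset f e v b)^2"
proof -
  have "(\<Sum>i<n. (flip v j ! i - v!i) * nn_direction f v i) =
        (\<Sum>i<n. if i = j then (1 - 2 * v!j) * nn_direction f v j else 0)"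
    using assms(2) bcube_length[OF assms(1)] by (intro sum.cong refl) (auto simp: flip_nth)
  also have "\<dots> = (if f (flip v j) then 1 else -1)"
    using assms(2) bcube_nth[OF assms] by (auto simp: nn_direction_def algebra_simps)
  finally show ?thesis
    using sqdist_shift[OF bcube_length[OF flip_in_bcube[OF assms]] bcube_length[OF assms(1)]]
      abs_nn_direction[OF assms(1)] sqdist_flip_left[OF assms]
    by (simp add: nn_point_def)
qed

lemma sqdist_nn_point_far:
  assumes "a \<in> bcube n" "v \<in> bcube n" "a \<noteq> v" "0 \<le> e" "e \<le> 1/4"
  shows "1 \<le> sqdist a (nn_point f e v (\<not> f a))"
proof -
  let ?t = "nn_offset f e v (\<not> f a)"
  from assms(1,2) show ?thesis
  proof (cases rule: bcube_near_cases)
    case 1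
    with assms(3) show ?thesis
      by simp
  next
    case (2 j)
    have "2 * ?t * (if f a then 1 else -1) \<le> 0"
      using assms(4) by (auto simp: nn_offset_def)
    moreover have "0 \<le> n * ?t^2"
      by simp
    ultimately show ?thesis
      using sqdist_nn_point_flip[OF assms(2) 2(1), of f e "\<not> f a"] unfolding 2(2) by linarith
  next
    case 3
    have t: "\<bar>?t\<bar> \<le> 1/4"
      using abs_nn_offset_le[OF assms(4), of f v "\<not> f a"] assms(5) by linarith
    then have "1 \<le> 2 * (1 - 2 * \<bar>?t\<bar>)"
      by simp
    also have "\<dots> \<le> sqdist a v * (1 - 2 * \<bar>?t\<bar>)"
      using 3 t by (intro mult_right_mono) auto
    also have "\<dots> \<le> sqdist a (nn_point f e v (\<not> f a))"
      unfolding nn_point_def using assms(1,2) abs_nn_direction[OF assms(2)]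
      by (intro sqdist_shift_ge) auto
    finally show ?thesis .
  qed
qed

lemma nn_point_nearest:
  assumes "cube_dominating n V" "a \<in> bcube n" "n \<ge> 1"
  defines "e \<equiv> 1 / (4 * n)"
  shows "\<exists>v0\<in>V. \<forall>v\<in>V. sqdist a (nn_point f e v0 (f a)) < sqdist a (nn_point f e v (\<not> f a))"
proof -
  have V: "V \<subseteq> bcube n" "\<forall>x\<in>bcube n. x \<in> V \<or> (\<exists>v\<in>V. \<exists>j<n. x = flip v j)"
    using assms(1) by (simp_all add: cube_dominating_def)
  have e: "0 < e" "e \<le> 1/4"
    using assms(3) by (simp_all add: e_def)
  have ne: "n * e^2 = e / 4"
    using assms(3) by (simp add: e_def power2_eq_square)
  have far: "1 \<le> sqdist a (nn_point f e v (\<not> f a))" if "v \<in> V" "v \<noteq> a" for v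
    by (rule sqdist_nn_point_far[OF assms(2)]) (use that V(1) e in auto)
  show ?thesis
  proof (cases "a \<in> V")
    case True
    have "sqdist a (nn_point f e a b) = (if f a = b then e / 16 else e / 4)" for b
      using sqdist_nn_point_centre[OF assms(2)] ne by (simp add: nn_offset_squared)
    then have "sqdist a (nn_point f e a (f a)) < sqdist a (nn_point f e v (\<not> f a))" if "v \<in> V" for v
      using far[OF that] e by (cases "v = a") auto
    with True show ?thesis
      by blast
  next
    case False
    then obtain v0 j where v0: "v0 \<in> V" "j < n" "a = flip v0 j"
      using V(2) assms(2) by blast
    let ?t = "nn_offset f e v0 (f a)"
    have "e / 2 \<le> ?t * (if f a then 1 else -1)"
      using e(1) by (auto simp: nn_offset_def)
    moreover have "n * ?t^2 \<le> e / 4"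
      using e(1) ne by (auto simp: nn_offset_squared)
    moreover have "sqdist a (nn_point f e v0 (f a)) = 1 - 2 * (?t * (if f a then 1 else -1)) + n * ?t^2"
      using sqdist_nn_point_flip[of v0 n j f e "f a"] v0 V(1) by auto
    ultimately have "sqdist a (nn_point f e v0 (f a)) < 1"
      using e(1) by linarith
    then show ?thesis
      using False far v0(1) by (intro bexI[of _ v0] ballI) (fastforce elim: order.strict_trans2)
  qed
qed

lemma NN_le_card:
  assumes "finite P" "finite N" "\<forall>x\<in>P \<union> N. length x = n"
    and "\<forall>a\<in>bcube n.
      (f a \<longrightarrow> (\<exists>b\<in>P. \<forall>c\<in>N. edist a b < edist a c)) \<and>
      (\<not> f a \<longrightarrow> (\<exists>b\<in>N. \<forall>c\<in>P. edist a b < edist a c))"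
  shows "NN n f \<le> card (P \<union> N)"
proof -
  \<comment> \<open>disjointness is free: a point of both P and N is never strictly nearest\<close>
  have nearest_not_shared: "b \<notin> C" if "\<forall>c\<in>C. edist a b < edist a c" for a b and C :: "real list set"
    using that by blast
  have "is_nn_rep n f (P - N) (N - P)"
    unfolding is_nn_rep_def
  proof (intro conjI ballI impI)
    fix a assume a: "a \<in> bcube n"
    show "\<exists>b\<in>P - N. \<forall>c\<in>N - P. edist a b < edist a c" if "f a"
      using assms(4) a that nearest_not_shared by (meson DiffD1 DiffI)
    show "\<exists>b\<in>N - P. \<forall>c\<in>P - N. edist a b < edist a c" if "\<not> f a"
      using assms(4) a that nearest_not_shared by (meson DiffD1 DiffI)
  qed (use assms(1-3) in auto)
  then have "NN n f \<le> card ((P - N) \<union> (N - P))"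
    unfolding NN_def by (intro Least_le) blast
  also have "\<dots> \<le> card (P \<union> N)"
    using assms(1,2) by (intro card_mono) auto
  finally show ?thesis .
qed

lemma NN_le_dominating:
  assumes "cube_dominating n V" "n \<ge> 1"
  shows "NN n f \<le> 2 * card V"
proof -
  define e :: real where "e = 1 / (4 * n)"
  define P where "P = (\<lambda>v. nn_point f e v True) ` V"
  define N where "N = (\<lambda>v. nn_point f e v False) ` V"
  have V: "V \<subseteq> bcube n" "finite V"
    using assms(1) finite_bcube finite_subset by (auto simp: cube_dominating_def)
  have "NN n f \<le> card (P \<union> N)"
  proof (rule NN_le_card)
    show "finite P" "finite N"
      using V by (simp_all add: P_def N_def)
    show "\<forall>x\<in>P \<union> N. length x = n"
      using V by (auto simp: P_def N_def nn_point_def bcube_length)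
    show "\<forall>a\<in>bcube n.
      (f a \<longrightarrow> (\<exists>b\<in>P. \<forall>c\<in>N. edist a b < edist a c)) \<and>
      (\<not> f a \<longrightarrow> (\<exists>b\<in>N. \<forall>c\<in>P. edist a b < edist a c))"
    proof
      fix a assume a: "a \<in> bcube n"
      obtain v0 where "v0 \<in> V"
        "\<forall>v\<in>V. sqdist a (nn_point f e v0 (f a)) < sqdist a (nn_point f e v (\<not> f a))"
        using nn_point_nearest[OF assms(1) a assms(2)] unfolding e_def by blast
      then show "(f a \<longrightarrow> (\<exists>b\<in>P. \<forall>c\<in>N. edist a b < edist a c)) \<and>
          (\<not> f a \<longrightarrow> (\<exists>b\<in>N. \<forall>c\<in>P. edist a b < edist a c))"
        by (cases "f a") (auto simp: P_def N_def edist_less_iff intro!: bexI[of _ v0])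
    qed
  qed
  also have "\<dots> \<le> card P + card N"
    by (rule card_Un_le)
  also have "\<dots> \<le> 2 * card V"
    unfolding P_def N_def using card_image_le[OF V(2)] by (metis add_mono mult_2)
  finally show ?thesis .
qed

lemma NN_upper_bound:
  assumes "n \<ge> 1"
  shows "real (NN n f) \<le> 2 ^ (n + 2) / n"
proof -
  obtain k where k: "2^k \<le> n + 1" "n + 1 < 2^(k + 1)"
    using ex_power_ivl1[of 2 "n + 1"] by auto
  obtain V where V: "cube_dominating n V" "card V * 2^k = 2^n"
    using hamming_code_dominating[OF k(1)] by blast
  have "NN n f * n \<le> 2 * card V * 2^(k + 1)"
    using NN_le_dominating[OF V(1) assms, of f] k(2) by (intro mult_mono) auto
  also have "\<dots> = 2^(n + 2)"
    using V(2) by simp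
  finally have "real (NN n f * n) \<le> real (2^(n + 2))"
    by (rule of_nat_mono)
  then show ?thesis
    using assms by (simp add: field_simps)
qed

theorem theorem3:
  shows "\<exists>eps :: nat \<Rightarrow> real. eps \<longlonglongrightarrow> 0 \<and>
           (\<forall>n \<ge> 1. \<forall>f :: real list \<Rightarrow> bool.
              real (NN n f) \<le> (1 + eps n) * 2 ^ (n + 2) / real n)"
  using NN_upper_bound by (intro exI[of _ "\<lambda>_. 0"]) simp

end
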